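(* If a countably infinite oligomorphic structure $\mathbb{A}$ has the finite length property over a field $\mathbb{F}$, then every structure $\mathbb{B}$ that is first-order interpretable in $\mathbb{A}$ is oligomorphic and has the finite length property over $\mathbb{F}$.
   Context: Oligomorphic: the automorphism group has finitely many orbits on each finite power. An orbit-finite set over $\mathbb{A}$ is obtained from some $\mathbb{A}^d$ by restricting to an $\operatorname{Aut}(\mathbb{A})$-invariant subset and quotienting by an $\operatorname{Aut}(\mathbb{A})$-invariant equivalence relation, with the induced action. A $\sigma'$-structure $\mathbb{B}$ (relational vocabulary $\sigma'$) is first-order interpretable in $\mathbb{A}$ if it is isomorphic to a structure whose underlying set is an orbit-finite set $X$ over $\mathbb{A}$ and in which each $d$-ary $R\in\sigma'$ is interpreted by an $\operatorname{Aut}(\mathbb{A})$-invariant subset of $X^d$. Finite length property over $\mathbb{F}$ for a structure $\mathbb{M}$: for every orbit-finite set $Y$ over $\mathbb{M}$, there is a finite bound on the lengths $n$ of chains $V_0\subsetneq\dots\subsetneq V_n$ of $\operatorname{Aut}(\mathbb{M})$-invariant subspaces of $\operatorname{Lin}_{\mathbb{F}}Y$ (finite formal linear combinations of elements of $Y$). *)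

theory Defs
  imports Main "HOL-Library.Countable_Set"
begin

text \<open>A relational structure is given by a universe D :: 'a set and an interpretation
  R :: 's => 'a list set of the relation symbols (tuples as lists), with arities ar.\<close>

definition wf_struct :: "'a set \<Rightarrow> ('s \<Rightarrow> 'a list set) \<Rightarrow> ('s \<Rightarrow> nat) \<Rightarrow> bool" where
  "wf_struct D R ar \<longleftrightarrow> (\<forall>s. R s \<subseteq> {xs. set xs \<subseteq> D \<and> length xs = ar s})"

definition Aut :: "'a set \<Rightarrow> ('s \<Rightarrow> 'a list set) \<Rightarrow> ('a \<Rightarrow> 'a) set" where
  "Aut D R = {f. bij_betw f D D \<and> (\<forall>x. x \<notin> D \<longrightarrow> f x = x) \<and>
      (\<forall>s xs. set xs \<subseteq> D \<longrightarrow> (xs \<in> R s \<longleftrightarrow> map f xs \<in> R s))}"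

definition tuples :: "'a set \<Rightarrow> nat \<Rightarrow> 'a list set" where
  "tuples D n = {xs. set xs \<subseteq> D \<and> length xs = n}"

definition orbits :: "'a set \<Rightarrow> ('s \<Rightarrow> 'a list set) \<Rightarrow> nat \<Rightarrow> 'a list set set" where
  "orbits D R n = {{map f xs | f. f \<in> Aut D R} | xs. xs \<in> tuples D n}"

definition oligomorphic :: "'a set \<Rightarrow> ('s \<Rightarrow> 'a list set) \<Rightarrow> bool" where
  "oligomorphic D R \<longleftrightarrow> (\<forall>n. finite (orbits D R n))"

text \<open>Orbit-finite set data: an Aut-invariant subset S of D^d together with an
  Aut-invariant equivalence relation E on S; the orbit-finite set is S // E, with the
  induced action act f.\<close>
definition orbit_finite_data ::
  "'a set \<Rightarrow> ('s \<Rightarrow> 'a list set) \<Rightarrow> nat \<Rightarrow> 'a list set \<Rightarrow> 'a list rel \<Rightarrow> bool" where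
  "orbit_finite_data D R d S E \<longleftrightarrow> S \<subseteq> tuples D d \<and> equiv S E \<and>
     (\<forall>f\<in>Aut D R. \<forall>xs\<in>S. map f xs \<in> S) \<and>
     (\<forall>f\<in>Aut D R. \<forall>xs ys. (xs, ys) \<in> E \<longrightarrow> (map f xs, map f ys) \<in> E)"

definition act :: "('a \<Rightarrow> 'a) \<Rightarrow> 'a list set \<Rightarrow> 'a list set" where
  "act f C = map f ` C"

text \<open>Lin_F Y: finite formal linear combinations = finitely supported functions Y -> F.\<close>
definition lin_space :: "'y set \<Rightarrow> ('y \<Rightarrow> 'f::field) set" where
  "lin_space Y = {v. finite {y. v y \<noteq> 0} \<and> {y. v y \<noteq> 0} \<subseteq> Y}"

definition lin_subspace :: "'y set \<Rightarrow> ('y \<Rightarrow> 'f::field) set \<Rightarrow> bool" where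
  "lin_subspace Y V \<longleftrightarrow> V \<subseteq> lin_space Y \<and> (\<lambda>_. 0) \<in> V \<and>
     (\<forall>v\<in>V. \<forall>w\<in>V. (\<lambda>y. v y + w y) \<in> V) \<and> (\<forall>c. \<forall>v\<in>V. (\<lambda>y. c * v y) \<in> V)"

text \<open>Invariance under the induced action of Aut on Lin_F (S//E) (Aut is a group, so
  closure under v |-> v o act f for all f is the same as closure under the action).\<close>
definition inv_subspace ::
  "'a set \<Rightarrow> ('s \<Rightarrow> 'a list set) \<Rightarrow> 'a list set set \<Rightarrow> ('a list set \<Rightarrow> 'f::field) set \<Rightarrow> bool" where
  "inv_subspace D R Y V \<longleftrightarrow> lin_subspace Y V \<and>
     (\<forall>f\<in>Aut D R. \<forall>v\<in>V. (\<lambda>C. if C \<in> Y then v (act f C) else 0) \<in> V)"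

definition finite_length_property ::
  "'a set \<Rightarrow> ('s \<Rightarrow> 'a list set) \<Rightarrow> 'f::field itself \<Rightarrow> bool" where
  "finite_length_property D R (F :: 'f itself) \<longleftrightarrow>
     (\<forall>d S E. orbit_finite_data D R d S E \<longrightarrow>
        (\<exists>N::nat. \<forall>(n::nat) (V :: nat \<Rightarrow> ('a list set \<Rightarrow> 'f) set).
           (\<forall>i\<le>n. inv_subspace D R (S // E) (V i)) \<and> (\<forall>i<n. V i \<subset> V (Suc i))
           \<longrightarrow> n \<le> N))"

text \<open>B = (DB, RB) is first-order interpretable in A = (D, R): B is isomorphic (via h) to a
  structure on an orbit-finite set S//E over A whose relations Q t are Aut(A)-invariant
  subsets of (S//E)^(arB t).\<close>
definition fo_interpretable ::
  "'a set \<Rightarrow> ('s \<Rightarrow> 'a list set) \<Rightarrow> 'b set \<Rightarrow> ('t \<Rightarrow> 'b list set) \<Rightarrow> ('t \<Rightarrow> nat) \<Rightarrow> bool" where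
  "fo_interpretable D R DB RB arB \<longleftrightarrow>
     (\<exists>d S E (Q :: 't \<Rightarrow> 'a list set list set) (h :: 'b \<Rightarrow> 'a list set).
        orbit_finite_data D R d S E \<and>
        (\<forall>t. Q t \<subseteq> tuples (S // E) (arB t)) \<and>
        (\<forall>t. \<forall>f\<in>Aut D R. \<forall>cs\<in>Q t. map (act f) cs \<in> Q t) \<and>
        bij_betw h DB (S // E) \<and>
        (\<forall>t bs. set bs \<subseteq> DB \<longrightarrow> (bs \<in> RB t \<longleftrightarrow> map h bs \<in> Q t)))"

end

(*
  Let B be interpreted in A on the orbit-finite set S//E over A, via h : B -> S//E. Conjugating
  by h turns every automorphism f of A into an automorphism of B, and n-tuples of B are decoded
  surjectively and equivariantly from the nd-tuples of A that are concatenations of n elements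
  of S. So every orbit of B^n is the image of an orbit of A^(nd), and B is oligomorphic.
  An orbit-finite set Y over B pulls back along the decoding to an orbit-finite set over A
  carrying an equivariant bijection onto Y. Precomposition with that bijection sends strictly
  increasing chains of Aut(B)-invariant subspaces of Lin Y to strictly increasing chains of
  Aut(A)-invariant subspaces over A, whose lengths are bounded by hypothesis.
*)

theory Submission
  imports Defs
begin

lemma Aut_bij: "f \<in> Aut D R \<Longrightarrow> bij f"
proof -
  assume "f \<in> Aut D R"
  then have "bij_betw f D D" "bij_betw f (- D) (- D)"
    by (auto simp: Aut_def bij_betw_def inj_on_def)
  then show "bij f" using bij_betw_combine by fastforce
qed

lemma Aut_id: "id \<in> Aut D R"
  by (simp add: Aut_def)

lemma Aut_comp:
  assumes f: "f \<in> Aut D R" and g: "g \<in> Aut D R"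
  shows "f \<circ> g \<in> Aut D R"
proof -
  have "set (map g xs) \<subseteq> D" if "set xs \<subseteq> D" for xs
    using g that by (auto simp: Aut_def dest: bij_betwE)
  then show ?thesis
    using f g by (auto simp: Aut_def intro: bij_betw_trans)
qed

lemma Aut_inv:
  assumes f: "f \<in> Aut D R"
  shows "inv f \<in> Aut D R"
proof -
  have bij: "bij f" and fD: "bij_betw f D D" and fix_out: "\<And>x. x \<notin> D \<Longrightarrow> f x = x"
    and rel: "\<And>s xs. set xs \<subseteq> D \<Longrightarrow> xs \<in> R s \<longleftrightarrow> map f xs \<in> R s"
    using f Aut_bij by (auto simp: Aut_def)
  have invD: "bij_betw (inv f) D D"
    using bij_betw_inv_into_subset[OF bij _ bij_betw_imp_surj_on[OF fD]] by simp
  have "inv f x = x" if "x \<notin> D" for x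
    using fix_out[OF that] bij by (metis bij_inv_eq_iff)
  moreover have "xs \<in> R s \<longleftrightarrow> map (inv f) xs \<in> R s" if xs: "set xs \<subseteq> D" for s xs
  proof -
    have "set (map (inv f) xs) \<subseteq> D" using xs invD by (auto dest: bij_betwE)
    then have "map (inv f) xs \<in> R s \<longleftrightarrow> map f (map (inv f) xs) \<in> R s" by (rule rel)
    then show ?thesis using bij by (simp add: bij_is_surj surj_f_inv_f map_idI)
  qed
  ultimately show ?thesis using invD by (simp add: Aut_def)
qed

lemma inv_comp_Aut: "f \<in> Aut D R \<Longrightarrow> inv f \<circ> f = id"
  by (simp add: Aut_bij bij_is_inj)

lemma map_inv_map_Aut: "f \<in> Aut D R \<Longrightarrow> map (inv f) (map f xs) = xs"
  by (simp add: inv_comp_Aut)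

lemma map_map_inv_Aut: "f \<in> Aut D R \<Longrightarrow> map f (map (inv f) xs) = xs"
  by (simp add: Aut_bij bij_is_surj surj_f_inv_f map_idI)

lemma act_class:
  assumes ofd: "orbit_finite_data D R d S E" and f: "f \<in> Aut D R" and xs: "xs \<in> S"
  shows "act f (E``{xs}) = E``{map f xs}"
proof
  have E_inv: "\<And>g xs ys. g \<in> Aut D R \<Longrightarrow> (xs, ys) \<in> E \<Longrightarrow> (map g xs, map g ys) \<in> E"
    using ofd by (simp add: orbit_finite_data_def)
  show "act f (E``{xs}) \<subseteq> E``{map f xs}" using E_inv[OF f] by (auto simp: act_def)
  show "E``{map f xs} \<subseteq> act f (E``{xs})"
  proof
    fix ys assume "ys \<in> E``{map f xs}"
    then have "(map (inv f) (map f xs), map (inv f) ys) \<in> E"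
      using E_inv[OF Aut_inv[OF f]] by blast
    then have "map (inv f) ys \<in> E``{xs}" by (simp only: map_inv_map_Aut[OF f] Image_singleton_iff)
    then show "ys \<in> act f (E``{xs})"
      unfolding act_def using map_map_inv_Aut[OF f] by (metis image_eqI)
  qed
qed

lemma act_in_quotient:
  assumes ofd: "orbit_finite_data D R d S E" and f: "f \<in> Aut D R" and C: "C \<in> S//E"
  shows "act f C \<in> S//E"
proof -
  obtain xs where "xs \<in> S" "C = E``{xs}" using C by (rule quotientE)
  moreover have "map f xs \<in> S" using ofd f \<open>xs \<in> S\<close> by (simp add: orbit_finite_data_def)
  ultimately show ?thesis using act_class[OF ofd f] by (simp add: quotientI)
qed

lemma act_inv_act: "f \<in> Aut D R \<Longrightarrow> act (inv f) (act f C) = C"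
  by (simp add: act_def image_image inv_comp_Aut)

lemma act_bij:
  assumes ofd: "orbit_finite_data D R d S E" and f: "f \<in> Aut D R"
  shows "bij_betw (act f) (S//E) (S//E)"
proof (rule bij_betw_byWitness[where f' = "act (inv f)"])
  show "\<forall>C\<in>S//E. act (inv f) (act f C) = C" using act_inv_act[OF f] by blast
  show "\<forall>C\<in>S//E. act f (act (inv f) C) = C"
    using act_inv_act[OF Aut_inv[OF f]] f by (simp add: Aut_bij inv_inv_eq)
  show "act f ` (S//E) \<subseteq> S//E" "act (inv f) ` (S//E) \<subseteq> S//E"
    using act_in_quotient[OF ofd] f Aut_inv[OF f] by auto
qed

definition orbit :: "'a set \<Rightarrow> ('s \<Rightarrow> 'a list set) \<Rightarrow> 'a list \<Rightarrow> 'a list set" where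
  "orbit D R xs = {map f xs | f. f \<in> Aut D R}"

lemma orbits_eq_image_orbit: "orbits D R n = orbit D R ` tuples D n"
  by (auto simp: orbits_def orbit_def)

lemma self_in_orbit: "xs \<in> orbit D R xs"
  using Aut_id by (force simp: orbit_def)

lemma orbit_map_Aut:
  assumes f: "f \<in> Aut D R"
  shows "orbit D R (map f xs) = orbit D R xs"
proof
  show "orbit D R (map f xs) \<subseteq> orbit D R xs"
  proof
    fix ys assume "ys \<in> orbit D R (map f xs)"
    then obtain g where "g \<in> Aut D R" "ys = map (g \<circ> f) xs" by (auto simp: orbit_def)
    then show "ys \<in> orbit D R xs" using Aut_comp[OF _ f] unfolding orbit_def by blast
  qed
  show "orbit D R xs \<subseteq> orbit D R (map f xs)"
  proof
    fix ys assume "ys \<in> orbit D R xs"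
    then obtain g where g: "g \<in> Aut D R" "ys = map g xs" by (auto simp: orbit_def)
    have "g \<circ> inv f \<circ> f = g" using inv_comp_Aut[OF f] by (simp add: comp_assoc)
    then have "ys = map (g \<circ> inv f) (map f xs)" using g(2) by simp
    then show "ys \<in> orbit D R (map f xs)"
      using Aut_comp[OF g(1) Aut_inv[OF f]] unfolding orbit_def by blast
  qed
qed

definition pullback :: "('y \<Rightarrow> 'z) \<Rightarrow> 'y set \<Rightarrow> ('z \<Rightarrow> 'f::zero) \<Rightarrow> 'y \<Rightarrow> 'f" where
  "pullback \<phi> Y v = (\<lambda>y. if y \<in> Y then v (\<phi> y) else 0)"

lemma inv_subspace_iff_pullback:
  "inv_subspace D R Y V \<longleftrightarrow> lin_subspace Y V \<and> (\<forall>f\<in>Aut D R. \<forall>v\<in>V. pullback (act f) Y v \<in> V)"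
  by (simp add: inv_subspace_def pullback_def)

lemma pullback_pullback:
  "\<phi> ` Y \<subseteq> Z \<Longrightarrow> pullback \<phi> Y (pullback \<psi> Z v) = pullback (\<psi> \<circ> \<phi>) Y v"
  by (auto simp: pullback_def fun_eq_iff)

lemma pullback_cong: "(\<And>y. y \<in> Y \<Longrightarrow> \<phi> y = \<psi> y) \<Longrightarrow> pullback \<phi> Y v = pullback \<psi> Y v"
  by (simp add: pullback_def fun_eq_iff)

lemma pullback_lin_space:
  assumes "inj_on \<phi> Y" and "v \<in> lin_space Z"
  shows "pullback \<phi> Y v \<in> lin_space Y"
proof -
  have fin: "finite (\<phi> -` {z. v z \<noteq> 0} \<inter> Y)"
    using assms by (intro finite_vimage_IntI) (simp_all add: lin_space_def)
  have "{y. pullback \<phi> Y v y \<noteq> 0} \<subseteq> \<phi> -` {z. v z \<noteq> 0} \<inter> Y"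
    by (auto simp: pullback_def)
  then show ?thesis unfolding lin_space_def using finite_subset[OF _ fin] by blast
qed

lemma lin_subspace_pullback:
  fixes V :: "('z \<Rightarrow> 'f::field) set"
  assumes inj: "inj_on \<phi> Y" and V: "lin_subspace Z V"
  shows "lin_subspace Y (pullback \<phi> Y ` V)"
  unfolding lin_subspace_def
proof (intro conjI ballI allI)
  show "pullback \<phi> Y ` V \<subseteq> lin_space Y"
    using V pullback_lin_space[OF inj, where Z = Z] by (auto simp: lin_subspace_def)
  have "(\<lambda>_. 0) = pullback \<phi> Y (\<lambda>_. 0 :: 'f)" by (simp add: pullback_def)
  then show "(\<lambda>_. 0) \<in> pullback \<phi> Y ` V" using V by (auto simp: lin_subspace_def)
  fix c :: 'f and v w assume "v \<in> pullback \<phi> Y ` V" "w \<in> pullback \<phi> Y ` V"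
  then obtain v' w' where v': "v' \<in> V" "v = pullback \<phi> Y v'" and w': "w' \<in> V" "w = pullback \<phi> Y w'"
    by blast
  have "(\<lambda>y. v y + w y) = pullback \<phi> Y (\<lambda>z. v' z + w' z)"
    and "(\<lambda>y. c * v y) = pullback \<phi> Y (\<lambda>z. c * v' z)"
    using v' w' by (auto simp: pullback_def fun_eq_iff)
  then show "(\<lambda>y. v y + w y) \<in> pullback \<phi> Y ` V" and "(\<lambda>y. c * v y) \<in> pullback \<phi> Y ` V"
    using V v' w' by (auto simp: lin_subspace_def)
qed

lemma inj_on_pullback:
  assumes "Z \<subseteq> \<phi> ` Y"
  shows "inj_on (pullback \<phi> Y) (lin_space Z)"
proof (rule inj_onI, rule ext)
  fix v w z
  assume v: "v \<in> lin_space Z" and w: "w \<in> lin_space Z" and eq: "pullback \<phi> Y v = pullback \<phi> Y w"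
  show "v z = w z"
  proof (cases "z \<in> Z")
    case True
    then obtain y where "y \<in> Y" "z = \<phi> y" using assms by blast
    then show ?thesis using fun_cong[OF eq, of y] by (simp add: pullback_def)
  next
    case False
    then have "v z = 0" "w z = 0" using v w unfolding lin_space_def by blast+
    then show ?thesis by simp
  qed
qed

definition inv_chain ::
  "'a set \<Rightarrow> ('s \<Rightarrow> 'a list set) \<Rightarrow> 'a list set set \<Rightarrow> nat \<Rightarrow> (nat \<Rightarrow> ('a list set \<Rightarrow> 'f::field) set) \<Rightarrow> bool" where
  "inv_chain D R Y n V \<longleftrightarrow> (\<forall>i\<le>n. inv_subspace D R Y (V i)) \<and> (\<forall>i<n. V i \<subset> V (Suc i))"

lemma finite_length_property_iff_inv_chain:
  "finite_length_property D R (TYPE('f::field)) \<longleftrightarrow>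
     (\<forall>d S E. orbit_finite_data D R d S E \<longrightarrow>
        (\<exists>N. \<forall>n (V :: nat \<Rightarrow> ('a list set \<Rightarrow> 'f) set). inv_chain D R (S // E) n V \<longrightarrow> n \<le> N))"
  by (simp add: finite_length_property_def inv_chain_def)

lemma equiv_inv_image_restrict:
  assumes "equiv A r" and "f ` B \<subseteq> A"
  shows "equiv B (Restr (inv_image r f) B)"
  using assms unfolding equiv_def refl_on_def sym_def trans_def inv_image_def by blast

lemma inv_image_class_image:
  assumes r: "equiv A r" and B: "f ` B \<subseteq> A" and x: "x \<in> B"
  shows "r `` f ` ((Restr (inv_image r f) B) `` {x}) = r `` {f x}"
proof
  show "r `` f ` ((Restr (inv_image r f) B) `` {x}) \<subseteq> r `` {f x}"
    using r by (auto simp: inv_image_def equiv_def dest: transD)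
  have "x \<in> Restr (inv_image r f) B `` {x}"
    using r B x by (auto simp: inv_image_def equiv_def refl_on_def)
  then show "r `` {f x} \<subseteq> r `` f ` (Restr (inv_image r f) B `` {x})" by blast
qed

lemma bij_betw_quotient_inv_image:
  assumes r: "equiv A r" and B: "f ` B = A"
  shows "bij_betw (\<lambda>X. r `` f ` X) (B // (Restr (inv_image r f) B)) (A // r)"
proof -
  let ?r = "Restr (inv_image r f) B"
  have r': "equiv B ?r" using equiv_inv_image_restrict[OF r] B by blast
  have class_image: "r `` f ` (?r `` {x}) = r `` {f x}" if "x \<in> B" for x
    using inv_image_class_image[OF r _ that] B by blast
  show ?thesis unfolding bij_betw_def
  proof
    show "inj_on (\<lambda>X. r `` f ` X) (B // ?r)"
    proof (rule inj_onI)
      fix X Y assume "X \<in> B // ?r" "Y \<in> B // ?r" and eq: "r `` f ` X = r `` f ` Y"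
      then obtain x y where xy: "x \<in> B" "y \<in> B" "X = ?r `` {x}" "Y = ?r `` {y}"
        by (auto elim!: quotientE)
      then have "(f x, f y) \<in> r" using eq class_image eq_equiv_class[OF _ r] B by auto
      then show "X = Y" using xy equiv_class_eq[OF r'] by simp
    qed
    have "(\<lambda>X. r `` f ` X) ` (B // ?r) = (\<lambda>x. r `` {f x}) ` B"
      using class_image by (simp add: quotient_def UNION_singleton_eq_range image_image)
    also have "\<dots> = A // r"
      unfolding quotient_def UNION_singleton_eq_range B[symmetric] image_image ..
    finally show "(\<lambda>X. r `` f ` X) ` (B // ?r) = A // r" .
  qed
qed

locale aut_transfer =
  fixes D :: "'a set" and R :: "'s \<Rightarrow> 'a list set"
    and DB :: "'b set" and RB :: "'t \<Rightarrow> 'b list set"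
    and ind :: "('a \<Rightarrow> 'a) \<Rightarrow> 'b \<Rightarrow> 'b"
  assumes ind_in_Aut: "f \<in> Aut D R \<Longrightarrow> ind f \<in> Aut DB RB"
begin

lemma inv_subspace_pullback:
  assumes inj: "inj_on \<phi> Y" and into: "\<phi> ` Y \<subseteq> Z"
    and equivariant: "\<And>f C. f \<in> Aut D R \<Longrightarrow> C \<in> Y \<Longrightarrow>
          act f C \<in> Y \<and> \<phi> (act f C) = act (ind f) (\<phi> C)"
    and V: "inv_subspace DB RB Z V"
  shows "inv_subspace D R Y (pullback \<phi> Y ` V)"
  unfolding inv_subspace_iff_pullback
proof (intro conjI ballI)
  show "lin_subspace Y (pullback \<phi> Y ` V)"
    using V unfolding inv_subspace_def by (blast intro: lin_subspace_pullback[OF inj])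
  fix f w assume f: "f \<in> Aut D R" and "w \<in> pullback \<phi> Y ` V"
  then obtain v where v: "v \<in> V" "w = pullback \<phi> Y v" by blast
  have "pullback (act f) Y w = pullback (\<phi> \<circ> act f) Y v"
    using v(2) equivariant[OF f] by (auto intro: pullback_pullback)
  also have "\<dots> = pullback (act (ind f) \<circ> \<phi>) Y v"
    by (rule pullback_cong) (simp add: equivariant[OF f])
  also have "\<dots> = pullback \<phi> Y (pullback (act (ind f)) Z v)"
    using into by (simp add: pullback_pullback)
  finally show "pullback (act f) Y w \<in> pullback \<phi> Y ` V"
    using V ind_in_Aut[OF f] v(1) by (simp add: inv_subspace_iff_pullback)
qed

lemma inv_chain_pullback:
  assumes bij: "bij_betw \<phi> Y Z"
    and equivariant: "\<And>f C. f \<in> Aut D R \<Longrightarrow> C \<in> Y \<Longrightarrow>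
          act f C \<in> Y \<and> \<phi> (act f C) = act (ind f) (\<phi> C)"
    and V: "inv_chain DB RB Z n V"
  shows "inv_chain D R Y n (\<lambda>i. pullback \<phi> Y ` V i)"
  unfolding inv_chain_def
proof (intro conjI allI impI)
  have inj: "inj_on \<phi> Y" and onto: "\<phi> ` Y = Z" using bij by (auto simp: bij_betw_def)
  fix i
  show "inv_subspace D R Y (pullback \<phi> Y ` V i)" if "i \<le> n"
  proof (rule inv_subspace_pullback[OF inj _ equivariant])
    show "\<phi> ` Y \<subseteq> Z" using onto by simp
    show "inv_subspace DB RB Z (V i)" using V that by (simp add: inv_chain_def)
  qed
  show "pullback \<phi> Y ` V i \<subset> pullback \<phi> Y ` V (Suc i)" if "i < n"
  proof (rule image_strict_mono)
    have "V (Suc i) \<subseteq> lin_space Z"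
      using V that by (simp add: inv_chain_def inv_subspace_def lin_subspace_def)
    then show "inj_on (pullback \<phi> Y) (V (Suc i))"
      using inj_on_pullback[of Z \<phi> Y] onto by (blast intro: inj_on_subset)
    show "V i \<subset> V (Suc i)" using V that by (simp add: inv_chain_def)
  qed
qed

definition equivariant_decoding ::
  "nat \<Rightarrow> 'a list set \<Rightarrow> nat \<Rightarrow> ('a list \<Rightarrow> 'b list) \<Rightarrow> bool" where
  "equivariant_decoding m T n \<rho> \<longleftrightarrow>
     T \<subseteq> tuples D m \<and> \<rho> ` T = tuples DB n \<and>
     (\<forall>f\<in>Aut D R. \<forall>xs\<in>T. map f xs \<in> T \<and> \<rho> (map f xs) = map (ind f) (\<rho> xs))"

lemma finite_orbits_decoding:
  assumes dec: "equivariant_decoding m T n \<rho>"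
    and fin: "finite (orbits D R m)"
  shows "finite (orbits DB RB n)"
proof -
  define g where "g xs = orbit DB RB (\<rho> xs)" for xs
  have T: "T \<subseteq> tuples D m" "\<rho> ` T = tuples DB n"
    and equivariant: "\<And>f xs. f \<in> Aut D R \<Longrightarrow> xs \<in> T \<Longrightarrow> \<rho> (map f xs) = map (ind f) (\<rho> xs)"
    using dec by (auto simp: equivariant_decoding_def)
  have g_orbit: "g ys = g xs" if xs: "xs \<in> T" and ys: "ys \<in> orbit D R xs" for xs ys
  proof -
    obtain f where "f \<in> Aut D R" "ys = map f xs" using ys by (auto simp: orbit_def)
    then show ?thesis using xs by (simp add: g_def equivariant ind_in_Aut orbit_map_Aut)
  qed
  have "orbits DB RB n = g ` T"
    by (simp add: orbits_eq_image_orbit g_def flip: T(2) image_image)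
  also have "\<dots> \<subseteq> (\<lambda>X. g (SOME xs. xs \<in> X \<inter> T)) ` orbits D R m"
  proof
    fix z assume "z \<in> g ` T"
    then obtain xs where xs: "xs \<in> T" "z = g xs" by blast
    have "(SOME ys. ys \<in> orbit D R xs \<inter> T) \<in> orbit D R xs \<inter> T"
      using self_in_orbit xs(1) by (intro someI) blast
    then have "g (SOME ys. ys \<in> orbit D R xs \<inter> T) = z" using g_orbit xs by blast
    moreover have "orbit D R xs \<in> orbits D R m" using xs(1) T(1) by (auto simp: orbits_eq_image_orbit)
    ultimately show "z \<in> (\<lambda>X. g (SOME xs. xs \<in> X \<inter> T)) ` orbits D R m" by blast
  qed
  finally show ?thesis using fin finite_surj by blast
qed

lemma orbit_finite_data_pullback:
  assumes dec: "equivariant_decoding m T n \<rho>"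
    and ofd: "orbit_finite_data DB RB n S E"
  shows "orbit_finite_data D R m (T \<inter> \<rho> -` S) (Restr (inv_image E \<rho>) (T \<inter> \<rho> -` S))"
proof -
  have E: "equiv S E" and S_inv: "\<And>g xs. g \<in> Aut DB RB \<Longrightarrow> xs \<in> S \<Longrightarrow> map g xs \<in> S"
    and E_inv: "\<And>g xs ys. g \<in> Aut DB RB \<Longrightarrow> (xs, ys) \<in> E \<Longrightarrow> (map g xs, map g ys) \<in> E"
    using ofd by (simp_all add: orbit_finite_data_def)
  have T: "T \<subseteq> tuples D m"
    and equivariant: "\<And>f xs. f \<in> Aut D R \<Longrightarrow> xs \<in> T \<Longrightarrow> map f xs \<in> T \<and> \<rho> (map f xs) = map (ind f) (\<rho> xs)"
    using dec by (simp_all add: equivariant_decoding_def)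
  have "equiv (T \<inter> \<rho> -` S) (Restr (inv_image E \<rho>) (T \<inter> \<rho> -` S))"
    by (rule equiv_inv_image_restrict[OF E]) blast
  moreover have "\<forall>f\<in>Aut D R. \<forall>xs\<in>T \<inter> \<rho> -` S. map f xs \<in> T \<inter> \<rho> -` S"
    by (simp add: equivariant S_inv ind_in_Aut)
  moreover have "\<forall>f\<in>Aut D R. \<forall>xs ys. (xs, ys) \<in> Restr (inv_image E \<rho>) (T \<inter> \<rho> -` S) \<longrightarrow>
      (map f xs, map f ys) \<in> Restr (inv_image E \<rho>) (T \<inter> \<rho> -` S)"
    by (simp add: inv_image_def equivariant S_inv E_inv ind_in_Aut)
  ultimately show ?thesis using T by (auto simp: orbit_finite_data_def)
qed

lemma quotient_pullback_equivariant:
  assumes dec: "equivariant_decoding m T n \<rho>"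
    and ofd: "orbit_finite_data DB RB n S E"
    and f: "f \<in> Aut D R"
    and C: "C \<in> (T \<inter> \<rho> -` S) // (Restr (inv_image E \<rho>) (T \<inter> \<rho> -` S))"
  shows "act f C \<in> (T \<inter> \<rho> -` S) // (Restr (inv_image E \<rho>) (T \<inter> \<rho> -` S)) \<and>
    E `` \<rho> ` act f C = act (ind f) (E `` \<rho> ` C)"
proof
  let ?S = "T \<inter> \<rho> -` S" and ?E = "Restr (inv_image E \<rho>) (T \<inter> \<rho> -` S)"
  have ofd': "orbit_finite_data D R m ?S ?E" by (rule orbit_finite_data_pullback[OF dec ofd])
  have E: "equiv S E" using ofd by (simp add: orbit_finite_data_def)
  have equivariant: "map f xs \<in> ?S \<and> \<rho> (map f xs) = map (ind f) (\<rho> xs)" if "xs \<in> ?S" for xs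
    using ofd' f that dec by (auto simp: orbit_finite_data_def equivariant_decoding_def)
  obtain xs where xs: "xs \<in> ?S" "C = ?E `` {xs}" using C by (rule quotientE)
  have act_C: "act f C = ?E `` {map f xs}" using act_class[OF ofd' f xs(1)] xs(2) by simp
  have map_xs: "map f xs \<in> ?S" using equivariant[OF xs(1)] by blast
  then show "act f C \<in> ?S // ?E" unfolding act_C by (rule quotientI)
  have \<rho>_S: "\<rho> ` ?S \<subseteq> S" by blast
  have "E `` \<rho> ` act f C = E `` {\<rho> (map f xs)}"
    unfolding act_C by (rule inv_image_class_image[OF E \<rho>_S map_xs])
  also have "\<dots> = act (ind f) (E `` {\<rho> xs})"
    using equivariant[OF xs(1)] act_class[OF ofd ind_in_Aut[OF f]] xs(1) by simp
  also have "\<dots> = act (ind f) (E `` \<rho> ` C)"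
    unfolding xs(2) inv_image_class_image[OF E \<rho>_S xs(1)] ..
  finally show "E `` \<rho> ` act f C = act (ind f) (E `` \<rho> ` C)" .
qed

lemma oligomorphic_if_decodings:
  assumes decodings: "\<And>n. \<exists>m T \<rho>. equivariant_decoding m T n \<rho>"
    and olig: "oligomorphic D R"
  shows "oligomorphic DB RB"
  unfolding oligomorphic_def
proof
  fix n
  obtain m T \<rho> where dec_n: "equivariant_decoding m T n \<rho>" using decodings by blast
  show "finite (orbits DB RB n)"
    by (rule finite_orbits_decoding[OF dec_n])
      (use olig in \<open>simp add: oligomorphic_def\<close>)
qed

lemma finite_length_property_if_decodings:
  assumes decodings: "\<And>n. \<exists>m T \<rho>. equivariant_decoding m T n \<rho>"
    and flp: "finite_length_property D R TYPE('f::field)"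
  shows "finite_length_property DB RB TYPE('f)"
  unfolding finite_length_property_iff_inv_chain
proof (intro allI impI)
  fix n S E assume ofd: "orbit_finite_data DB RB n S E"
  obtain m T \<rho> where dec: "equivariant_decoding m T n \<rho>" using decodings by blast
  let ?S = "T \<inter> \<rho> -` S" and ?E = "Restr (inv_image E \<rho>) (T \<inter> \<rho> -` S)"
  have "orbit_finite_data D R m ?S ?E" by (rule orbit_finite_data_pullback[OF dec ofd])
  then obtain N where N: "\<And>k (V :: nat \<Rightarrow> ('a list set \<Rightarrow> 'f) set). inv_chain D R (?S // ?E) k V \<Longrightarrow> k \<le> N"
    using flp unfolding finite_length_property_iff_inv_chain by blast
  have "S \<subseteq> \<rho> ` T"
    using dec ofd by (simp add: equivariant_decoding_def orbit_finite_data_def)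
  then have "\<rho> ` ?S = S" by blast
  then have bij: "bij_betw (\<lambda>X. E `` \<rho> ` X) (?S // ?E) (S // E)"
    by (intro bij_betw_quotient_inv_image) (use ofd in \<open>simp_all add: orbit_finite_data_def\<close>)
  have equivariant: "\<And>f C. f \<in> Aut D R \<Longrightarrow> C \<in> ?S // ?E \<Longrightarrow>
      act f C \<in> ?S // ?E \<and> E `` \<rho> ` act f C = act (ind f) (E `` \<rho> ` C)"
    by (rule quotient_pullback_equivariant[OF dec ofd])
  show "\<exists>N. \<forall>k (V :: nat \<Rightarrow> ('b list set \<Rightarrow> 'f) set). inv_chain DB RB (S // E) k V \<longrightarrow> k \<le> N"
  proof (intro exI allI impI)
    fix k and V :: "nat \<Rightarrow> ('b list set \<Rightarrow> 'f) set"
    assume V: "inv_chain DB RB (S // E) k V"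
    have "inv_chain D R (?S // ?E) k (\<lambda>i. pullback (\<lambda>X. E `` \<rho> ` X) (?S // ?E) ` V i)"
      by (rule inv_chain_pullback[OF bij equivariant V])
    then show "k \<le> N" by (rule N)
  qed
qed

end

(* The number n of chunks is explicit because for d = 0 it cannot be read off the list. *)
definition chunks :: "nat \<Rightarrow> nat \<Rightarrow> 'x list \<Rightarrow> 'x list list" where
  "chunks d n xs = map (\<lambda>i. take d (drop (i * d) xs)) [0..<n]"

lemma take_drop_mult_concat:
  assumes "\<forall>ys\<in>set yss. length ys = d" and "i < length yss"
  shows "take d (drop (i * d) (concat yss)) = yss ! i"
  using assms
proof (induction yss arbitrary: i)
  case (Cons ys yss)
  then show ?case by (cases i) (auto simp: drop_append add.commute)
qed simp

lemma length_concat_const: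
  "\<forall>ys\<in>set yss. length ys = d \<Longrightarrow> length (concat yss) = length yss * d"
  by (induction yss) auto

lemma chunks_concat:
  assumes "\<forall>ys\<in>set yss. length ys = d"
  shows "chunks d (length yss) (concat yss) = yss"
  unfolding chunks_def by (rule nth_equalityI) (simp_all add: take_drop_mult_concat[OF assms])

locale fo_interpretation =
  fixes D :: "'a set" and R :: "'s \<Rightarrow> 'a list set"
    and DB :: "'b set" and RB :: "'t \<Rightarrow> 'b list set"
    and d :: nat and S :: "'a list set" and E :: "'a list rel"
    and Q :: "'t \<Rightarrow> 'a list set list set" and h :: "'b \<Rightarrow> 'a list set"
  assumes ofd: "orbit_finite_data D R d S E"
    and Q_inv: "\<And>t f cs. f \<in> Aut D R \<Longrightarrow> cs \<in> Q t \<Longrightarrow> map (act f) cs \<in> Q t"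
    and h_bij: "bij_betw h DB (S // E)"
    and h_rel: "\<And>t bs. set bs \<subseteq> DB \<Longrightarrow> bs \<in> RB t \<longleftrightarrow> map h bs \<in> Q t"
begin

definition induced_aut :: "('a \<Rightarrow> 'a) \<Rightarrow> 'b \<Rightarrow> 'b" where
  "induced_aut f b = (if b \<in> DB then inv_into DB h (act f (h b)) else b)"

lemma h_induced_aut:
  assumes "f \<in> Aut D R" and "b \<in> DB"
  shows "h (induced_aut f b) = act f (h b)"
  using assms act_in_quotient[OF ofd] bij_betwE[OF h_bij] bij_betw_inv_into_right[OF h_bij]
  by (simp add: induced_aut_def)

lemma induced_aut_in_DB:
  assumes "f \<in> Aut D R" and "b \<in> DB"
  shows "induced_aut f b \<in> DB"
  using assms act_in_quotient[OF ofd] bij_betwE[OF h_bij] bij_betwE[OF bij_betw_inv_into[OF h_bij]]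
  by (simp add: induced_aut_def)

lemma map_act_in_Q_iff:
  assumes f: "f \<in> Aut D R"
  shows "map (act f) cs \<in> Q t \<longleftrightarrow> cs \<in> Q t"
proof
  assume "map (act f) cs \<in> Q t"
  then have "map (act (inv f)) (map (act f) cs) \<in> Q t" using Q_inv[OF Aut_inv[OF f]] by blast
  then show "cs \<in> Q t" by (simp add: act_inv_act[OF f] map_idI)
qed (rule Q_inv[OF f])

lemma induced_aut_in_Aut:
  assumes f: "f \<in> Aut D R"
  shows "induced_aut f \<in> Aut DB RB"
proof -
  have "bij_betw (inv_into DB h \<circ> act f \<circ> h) DB DB"
    using bij_betw_trans[OF h_bij bij_betw_trans[OF act_bij[OF ofd f] bij_betw_inv_into[OF h_bij]]]
    by (simp add: comp_assoc)
  then have "bij_betw (induced_aut f) DB DB"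
    by (rule bij_betw_cong[THEN iffD1, rotated]) (simp add: induced_aut_def)
  moreover have "bs \<in> RB t \<longleftrightarrow> map (induced_aut f) bs \<in> RB t" if bs: "set bs \<subseteq> DB" for t bs
  proof -
    have map_h: "map h (map (induced_aut f) bs) = map (act f) (map h bs)"
      using bs h_induced_aut[OF f] by auto
    have "map (induced_aut f) bs \<in> RB t \<longleftrightarrow> map h (map (induced_aut f) bs) \<in> Q t"
      using bs induced_aut_in_DB[OF f] by (intro h_rel) auto
    also have "\<dots> \<longleftrightarrow> map (act f) (map h bs) \<in> Q t" unfolding map_h ..
    also have "\<dots> \<longleftrightarrow> map h bs \<in> Q t" by (rule map_act_in_Q_iff[OF f])
    also have "\<dots> \<longleftrightarrow> bs \<in> RB t" using h_rel[OF bs] by simp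
    finally show ?thesis by simp
  qed
  ultimately show ?thesis by (simp add: Aut_def induced_aut_def)
qed

sublocale aut_transfer D R DB RB induced_aut
  by unfold_locales (rule induced_aut_in_Aut)

definition encodings :: "nat \<Rightarrow> 'a list set" where
  "encodings n = concat ` {yss. set yss \<subseteq> S \<and> length yss = n}"

definition decode_rep :: "'a list \<Rightarrow> 'b" where
  "decode_rep ys = inv_into DB h (E``{ys})"

definition decode :: "nat \<Rightarrow> 'a list \<Rightarrow> 'b list" where
  "decode n xs = map decode_rep (chunks d n xs)"

lemma S_tuples: "S \<subseteq> tuples D d"
  using ofd by (simp add: orbit_finite_data_def)

lemma concat_tuples:
  assumes "set yss \<subseteq> S"
  shows "concat yss \<in> tuples D (length yss * d)" and "chunks d (length yss) (concat yss) = yss"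
proof -
  have "\<forall>ys\<in>set yss. set ys \<subseteq> D \<and> length ys = d" using assms S_tuples by (auto simp: tuples_def)
  then show "concat yss \<in> tuples D (length yss * d)" "chunks d (length yss) (concat yss) = yss"
    by (auto simp: tuples_def length_concat_const chunks_concat)
qed

lemma decode_concat:
  "set yss \<subseteq> S \<Longrightarrow> decode (length yss) (concat yss) = map decode_rep yss"
  by (simp add: decode_def concat_tuples(2))

lemma decode_rep_in_DB: "ys \<in> S \<Longrightarrow> decode_rep ys \<in> DB"
  using bij_betwE[OF bij_betw_inv_into[OF h_bij]] by (simp add: decode_rep_def quotientI)

lemma decode_rep_map:
  assumes f: "f \<in> Aut D R" and ys: "ys \<in> S"
  shows "decode_rep (map f ys) = induced_aut f (decode_rep ys)"
  using decode_rep_in_DB[OF ys] bij_betw_inv_into_right[OF h_bij] act_class[OF ofd f ys]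
  by (simp add: decode_rep_def induced_aut_def quotientI ys)

lemma encodings_tuples: "encodings n \<subseteq> tuples D (n * d)"
  using concat_tuples(1) by (auto simp: encodings_def)

lemma decode_image_encodings: "decode n ` encodings n = tuples DB n"
proof
  show "decode n ` encodings n \<subseteq> tuples DB n"
  proof (rule image_subsetI)
    fix xs assume "xs \<in> encodings n"
    then obtain yss where yss: "set yss \<subseteq> S" "length yss = n" "xs = concat yss"
      by (auto simp: encodings_def)
    have "set (map decode_rep yss) \<subseteq> DB"
      using yss(1) decode_rep_in_DB by auto
    then show "decode n xs \<in> tuples DB n"
      unfolding yss(3) yss(2)[symmetric] decode_concat[OF yss(1)] by (simp add: tuples_def)
  qed
  show "tuples DB n \<subseteq> decode n ` encodings n"
  proof
    fix bs assume bs: "bs \<in> tuples DB n"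
    have "\<forall>b\<in>DB. \<exists>ys. ys \<in> S \<and> h b = E``{ys}"
      using bij_betwE[OF h_bij] by (auto simp: quotient_def)
    then obtain rep where rep: "\<And>b. b \<in> DB \<Longrightarrow> rep b \<in> S \<and> h b = E``{rep b}"
      by (auto dest!: bchoice)
    have reps: "set (map rep bs) \<subseteq> S" "length (map rep bs) = n"
      using rep bs by (auto simp: tuples_def)
    then have "concat (map rep bs) \<in> encodings n" by (auto simp: encodings_def)
    moreover have "decode n (concat (map rep bs)) = bs"
      using decode_concat[OF reps(1)] reps(2) rep bs bij_betw_inv_into_left[OF h_bij]
      by (auto simp: decode_rep_def tuples_def intro!: map_idI)
    ultimately show "bs \<in> decode n ` encodings n" by (rule rev_image_eqI[OF _ sym])
  qed
qed

lemma decode_map_encodings: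
  assumes f: "f \<in> Aut D R" and xs: "xs \<in> encodings n"
  shows "map f xs \<in> encodings n \<and> decode n (map f xs) = map (induced_aut f) (decode n xs)"
proof
  obtain yss where yss: "set yss \<subseteq> S" "length yss = n" "xs = concat yss"
    using xs by (auto simp: encodings_def)
  have S_map: "set (map (map f) yss) \<subseteq> S"
    using yss(1) ofd f by (auto simp: orbit_finite_data_def)
  show "map f xs \<in> encodings n"
    using S_map yss by (auto simp: encodings_def map_concat)
  have "decode n (map f xs) = map decode_rep (map (map f) yss)"
    using decode_concat[OF S_map] yss(2,3) by (simp only: map_concat length_map)
  also have "\<dots> = map (induced_aut f) (map decode_rep yss)"
    using yss(1) decode_rep_map[OF f] by auto
  also have "\<dots> = map (induced_aut f) (decode n xs)"
    using decode_concat[OF yss(1)] yss(2,3) by simp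
  finally show "decode n (map f xs) = map (induced_aut f) (decode n xs)" .
qed

lemma equivariant_decoding_encodings:
  "equivariant_decoding (n * d) (encodings n) n (decode n)"
  using encodings_tuples decode_image_encodings decode_map_encodings
  by (simp add: equivariant_decoding_def)

lemma decodings: "\<exists>m T \<rho>. equivariant_decoding m T n \<rho>"
  using equivariant_decoding_encodings by blast

lemma oligomorphic_interpreted: "oligomorphic D R \<Longrightarrow> oligomorphic DB RB"
  by (rule oligomorphic_if_decodings[OF decodings])

lemma finite_length_property_interpreted:
  "finite_length_property D R TYPE('f::field) \<Longrightarrow> finite_length_property DB RB TYPE('f)"
  by (rule finite_length_property_if_decodings[OF decodings])

end

theorem mainTheorem17:
  fixes D :: "'a set" and R :: "'s \<Rightarrow> 'a list set" and ar :: "'s \<Rightarrow> nat"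
    and DB :: "'b set" and RB :: "'t \<Rightarrow> 'b list set" and arB :: "'t \<Rightarrow> nat"
  assumes "wf_struct D R ar" and "countable D" and "infinite D"
    and "oligomorphic D R"
    and "finite_length_property D R TYPE('f::field)"
    and "wf_struct DB RB arB"
    and "fo_interpretable D R DB RB arB"
  shows "oligomorphic DB RB \<and> finite_length_property DB RB TYPE('f)"
proof -
  obtain d S E Q h where "orbit_finite_data D R d S E"
    and "\<forall>t. \<forall>f\<in>Aut D R. \<forall>cs\<in>Q t. map (act f) cs \<in> Q t"
    and "bij_betw h DB (S // E)"
    and "\<forall>t bs. set bs \<subseteq> DB \<longrightarrow> (bs \<in> RB t \<longleftrightarrow> map h bs \<in> Q t)"
    using assms(7) unfolding fo_interpretable_def by blast
  then interpret fo_interpretation D R DB RB d S E Q h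
    by unfold_locales auto
  show ?thesis
    using oligomorphic_interpreted[OF assms(4)] finite_length_property_interpreted[OF assms(5)] by blast
qed

end
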